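(* Let $S$ be a poset and let $S\otimes_i G_i$ and $S\otimes_i H_i$ be terminating ordered joins in the same shape $S$. If $G_i\simeq_1 H_i$ for every $i\in S$, then $S\otimes_i G_i\simeq_1 S\otimes_i H_i$.
   Context: All games are impartial combinatorial games under normal play; a game is determined by its set of options, and $G \to G'$ means $G'$ is an option of $G$. A game is terminating if it admits no infinite sequence of moves. $\mathbf{0}$ denotes the game with no options. The Grundy number of a terminating game $G$ is the ordinal $\Gamma_0(G)=\operatorname{mex}\{\Gamma_0(G') : G\to G'\}$, where $\operatorname{mex}\Lambda$ is the least ordinal not in the set of ordinals $\Lambda$. The Grundy set of a terminating game $G$ is $\Gamma_1(G)=\{\Gamma_0(G') : G\to G'\}$. Games $G,H$ are $1$-equivalent, $G\simeq_1 H$, if $\Gamma_1(G)=\Gamma_1(H)$. Ordered join: for a poset $S$ and a family $(G_i)_{i\in S}$ of games, $S \otimes_i G_i$ is the game whose options are exactly the ordered joins $S \otimes_i G'_i$ obtained by choosing one $i_0\in S$ and an option $G_{i_0}\to G'_{i_0}$, and setting $G'_i=\mathbf{0}$ for all $i>i_0$ and $G'_i=G_i$ for all other $i\ne i_0$. *)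

theory Defs
  imports Main
begin

text \<open>Impartial games are modelled as positions in a move graph M :: 'p => 'p => bool
  (M x y means y is an option of x).  Grundy values of positions of type 'p are taken in a
  fixed well-order on the type 'p set, which (by Cantor) is longer than any Grundy ordinal
  arising for positions of type 'p; equality of these values coincides with equality of the
  ordinal Grundy numbers.\<close>

definition terminating :: "('p \<Rightarrow> 'p \<Rightarrow> bool) \<Rightarrow> 'p \<Rightarrow> bool" where
  "terminating M x \<longleftrightarrow> \<not> (\<exists>f. f 0 = x \<and> (\<forall>n. M (f n) (f (Suc n))))"

definition grundy_order :: "('p set \<times> 'p set) set" where
  "grundy_order = (SOME r. Well_order r \<and> Field r = UNIV)"

definition mex :: "'p set set \<Rightarrow> 'p set" where
  "mex A = (SOME a. a \<notin> A \<and> (\<forall>b. b \<notin> A \<longrightarrow> (a, b) \<in> grundy_order))"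

definition grundy0 :: "('p \<Rightarrow> 'p \<Rightarrow> bool) \<Rightarrow> 'p \<Rightarrow> 'p set" where
  "grundy0 M = wfrec {(y, x). M x y \<and> terminating M x} (\<lambda>f x. mex (f ` {y. M x y}))"

definition grundy1 :: "('p \<Rightarrow> 'p \<Rightarrow> bool) \<Rightarrow> 'p \<Rightarrow> 'p set set" where
  "grundy1 M x = grundy0 M ` {y. M x y}"

definition equiv1 :: "('p \<Rightarrow> 'p \<Rightarrow> bool) \<Rightarrow> 'p \<Rightarrow> 'p \<Rightarrow> bool" where
  "equiv1 M x y \<longleftrightarrow> grundy1 M x = grundy1 M y"

text \<open>Ordered joins over a poset (S, r).  A position of the join is a family of component
  positions; None stands for the zero game.\<close>

definition opt_move :: "('a \<Rightarrow> 'a \<Rightarrow> bool) \<Rightarrow> 'a option \<Rightarrow> 'a \<Rightarrow> bool" where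
  "opt_move M a x' \<longleftrightarrow> (case a of None \<Rightarrow> False | Some x \<Rightarrow> M x x')"

definition join_move :: "'i set \<Rightarrow> 'i rel \<Rightarrow> ('a \<Rightarrow> 'a \<Rightarrow> bool)
    \<Rightarrow> ('i \<Rightarrow> 'a option) \<Rightarrow> ('i \<Rightarrow> 'a option) \<Rightarrow> bool" where
  "join_move S r M p q \<longleftrightarrow>
     (\<exists>i0\<in>S. \<exists>x'. opt_move M (p i0) x' \<and>
        q = (\<lambda>i. if i = i0 then Some x'
                 else if i \<in> S \<and> (i0, i) \<in> r then None
                 else p i))"

definition join_init :: "('i \<Rightarrow> 'a) \<Rightarrow> ('i \<Rightarrow> 'a option)" where
  "join_init g = (\<lambda>i. Some (g i))"

end

theory Submission
  imports Defs
begin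

text \<open>Call two join positions related if at every index both components are zero, or they
  have equal Grundy sets, or they have equal Grundy values and the index is the topmost nonzero
  one in both positions.  Related terminating positions have equal Grundy values, by
  well-founded induction on the pair: by the mex criterion it suffices that no option of one has
  the Grundy value of the other.  A move at component j is either answered in the other position
  at j by a move to the same Grundy value, giving related options, or it cannot be answered; then
  the j-th components only share their Grundy value, j is topmost nonzero, and the move is
  reversible: moving back at j to a component of the original Grundy value yields a position
  related to the other one.  Answering single moves from the initial positions in the same way
  shows that the Grundy sets of the two joins coincide.\<close>

lemma grundy_order_well_order: "Well_order grundy_order" "Field grundy_order = UNIV"
  using someI_ex[OF well_ordering] unfolding grundy_order_def by auto

lemma grundy_order_antisym: "(a, b) \<in> grundy_order \<Longrightarrow> (b, a) \<in> grundy_order \<Longrightarrow> a = b"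
  using grundy_order_well_order(1)
  unfolding well_order_on_def linear_order_on_def partial_order_on_def antisym_def by blast

lemma mex_spec:
  fixes A :: "'p set set"
  assumes "A \<noteq> UNIV"
  shows "mex A \<notin> A \<and> (\<forall>b. b \<notin> A \<longrightarrow> (mex A, b) \<in> grundy_order)"
proof -
  let ?o = "grundy_order :: ('p set \<times> 'p set) set"
  have "well_order_on UNIV ?o"
    using grundy_order_well_order(1) unfolding grundy_order_well_order(2) .
  then have lin: "linear_order_on UNIV ?o" and wf: "wf (?o - Id)"
    unfolding well_order_on_def by (rule conjunct1, rule conjunct2)
  obtain c where "c \<notin> A" using assms by blast
  then obtain a where a: "a \<notin> A" and a_min: "\<And>b. (b, a) \<in> ?o - Id \<Longrightarrow> b \<in> A"
    using wfE_min[OF wf, of c "- A"] by auto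
  have "(a, b) \<in> ?o" if "b \<notin> A" for b
  proof (cases "a = b")
    case True
    with lin show ?thesis
      by (simp add: linear_order_on_def partial_order_on_def preorder_on_def refl_on_def)
  next
    case False
    with lin a_min[of b] that show ?thesis
      by (simp add: linear_order_on_def total_on_def) blast
  qed
  then have "\<exists>a. a \<notin> A \<and> (\<forall>b. b \<notin> A \<longrightarrow> (a, b) \<in> ?o)" using a by blast
  then show ?thesis unfolding mex_def by (rule someI_ex)
qed

lemma mex_notin: "A \<noteq> UNIV \<Longrightarrow> mex A \<notin> A"
  using mex_spec by blast

lemma mex_least: "A \<noteq> UNIV \<Longrightarrow> b \<notin> A \<Longrightarrow> (mex A, b) \<in> grundy_order"
  using mex_spec by blast

lemma mex_eqI:
  assumes "A \<noteq> UNIV" "B \<noteq> UNIV" "mex A \<notin> B" "mex B \<notin> A"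
  shows "mex A = mex B"
  using grundy_order_antisym mex_least assms by blast

lemma mex_in_if_mex_notin:
  assumes "A \<noteq> UNIV" "B \<noteq> UNIV" "mex A \<notin> B" "mex A \<noteq> mex B"
  shows "mex B \<in> A"
  using grundy_order_antisym mex_least assms by blast

lemma grundy1_ne_UNIV: "grundy1 M x \<noteq> UNIV"
proof
  assume "grundy1 M x = UNIV"
  then have "surj (grundy0 M)" unfolding grundy1_def by blast
  then show False using Cantors_theorem[of UNIV] by auto
qed

lemma terminating_move:
  assumes "terminating M x" "M x y"
  shows "terminating M y"
  unfolding terminating_def
proof
  assume "\<exists>f. f 0 = y \<and> (\<forall>n. M (f n) (f (Suc n)))"
  then obtain f where "f 0 = y" "\<forall>n. M (f n) (f (Suc n))" by blast
  with assms(2) have "\<forall>n. M (case_nat x f n) (case_nat x f (Suc n))"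
    by (auto split: nat.split)
  with assms(1) show False unfolding terminating_def by (metis old.nat.simps(4))
qed

definition move_rel :: "('p \<Rightarrow> 'p \<Rightarrow> bool) \<Rightarrow> ('p \<times> 'p) set" where
  "move_rel M = {(y, x). M x y \<and> terminating M x}"

lemma wf_move_rel: "wf (move_rel M)"
  unfolding wf_iff_no_infinite_down_chain move_rel_def terminating_def by auto

lemma grundy0_mex: "terminating M x \<Longrightarrow> grundy0 M x = mex (grundy1 M x)"
  unfolding grundy1_def grundy0_def
  by (subst wfrec[OF wf_move_rel[unfolded move_rel_def]]) (auto simp: cut_apply intro!: arg_cong[of _ _ mex])

lemma grundy0_option_neq:
  assumes "terminating M x" "M x y"
  shows "grundy0 M y \<noteq> grundy0 M x"
proof -
  have "grundy0 M y \<in> grundy1 M x" using assms(2) unfolding grundy1_def by simp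
  then show ?thesis
    using mex_notin[OF grundy1_ne_UNIV, of M x] grundy0_mex[OF assms(1)] by auto
qed

lemma grundy0_eqI:
  assumes "terminating M x" "terminating M y"
    and "grundy0 M y \<notin> grundy1 M x" "grundy0 M x \<notin> grundy1 M y"
  shows "grundy0 M x = grundy0 M y"
  using assms mex_eqI[OF grundy1_ne_UNIV grundy1_ne_UNIV] by (simp add: grundy0_mex)

text \<open>The value of x', not attained by options of y, exceeds their mex, the value of y; and every
  value below that of x' is attained by an option of x'.\<close>

lemma grundy0_in_grundy1_if_unmatched:
  assumes "terminating M y" "terminating M x'"
    and "grundy0 M x' \<noteq> grundy0 M y" "grundy0 M x' \<notin> grundy1 M y"
  shows "grundy0 M y \<in> grundy1 M x'"
  using assms mex_in_if_mex_notin[OF grundy1_ne_UNIV grundy1_ne_UNIV] by (simp add: grundy0_mex)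

definition join_upd :: "'i set \<Rightarrow> 'i rel \<Rightarrow> ('i \<Rightarrow> 'a option) \<Rightarrow> 'i \<Rightarrow> 'a \<Rightarrow> 'i \<Rightarrow> 'a option" where
  "join_upd S r P j x = (\<lambda>i. if i = j then Some x else if i \<in> S \<and> (j, i) \<in> r then None else P i)"

definition join_top :: "'i set \<Rightarrow> 'i rel \<Rightarrow> ('i \<Rightarrow> 'a option) \<Rightarrow> 'i \<Rightarrow> bool" where
  "join_top S r P i \<longleftrightarrow> (\<forall>l\<in>S. (i, l) \<in> r \<and> l \<noteq> i \<longrightarrow> P l = None)"

lemma opt_move_iff: "opt_move M a x' \<longleftrightarrow> (\<exists>x. a = Some x \<and> M x x')"
  unfolding opt_move_def by (cases a) auto

lemma join_move_iff:
  "join_move S r M P Q \<longleftrightarrow> (\<exists>j\<in>S. \<exists>x x'. P j = Some x \<and> M x x' \<and> Q = join_upd S r P j x')"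
  unfolding join_move_def join_upd_def opt_move_iff by blast

lemma join_upd_upd: "join_upd S r (join_upd S r P j x) j y = join_upd S r P j y"
  unfolding join_upd_def by auto

lemma join_upd_self: "P j = Some x \<Longrightarrow> join_top S r P j \<Longrightarrow> join_upd S r P j x = P"
  unfolding join_upd_def join_top_def by auto

lemma join_terminating_component:
  assumes "terminating (join_move S r M) P" "j \<in> S" "P j = Some x"
  shows "terminating M x"
  unfolding terminating_def
proof
  assume "\<exists>f. f 0 = x \<and> (\<forall>n. M (f n) (f (Suc n)))"
  then obtain f where f: "f 0 = x" "\<forall>n. M (f n) (f (Suc n))" by blast
  define F where "F n = (if n = 0 then P else join_upd S r P j (f n))" for n
  have "F n j = Some (f n)" for n using assms(3) f(1) by (auto simp: F_def join_upd_def)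
  moreover have "F (Suc n) = join_upd S r (F n) j (f (Suc n))" for n
    by (cases n) (auto simp: F_def join_upd_upd)
  ultimately have "\<forall>n. join_move S r M (F n) (F (Suc n))"
    using f(2) assms(2) unfolding join_move_iff by blast
  moreover have "F 0 = P" by (simp add: F_def)
  ultimately show False using assms(1) unfolding terminating_def by blast
qed

definition join_sim :: "'i set \<Rightarrow> 'i rel \<Rightarrow> ('a \<Rightarrow> 'a \<Rightarrow> bool)
    \<Rightarrow> ('i \<Rightarrow> 'a option) \<Rightarrow> ('i \<Rightarrow> 'a option) \<Rightarrow> bool" where
  "join_sim S r M P Q \<longleftrightarrow> (\<forall>i\<in>S. rel_option (\<lambda>x y. grundy1 M x = grundy1 M y \<or>
      grundy0 M x = grundy0 M y \<and> join_top S r P i \<and> join_top S r Q i) (P i) (Q i))"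

lemma join_sim_sym: "join_sim S r M P Q \<Longrightarrow> join_sim S r M Q P"
  unfolding join_sim_def by (auto simp: option.rel_sel)

lemma join_sim_upd:
  assumes "join_sim S r M P Q" "P j \<noteq> None" "Q j \<noteq> None" "grundy0 M a = grundy0 M b"
  shows "join_sim S r M (join_upd S r P j a) (join_upd S r Q j b)"
  unfolding join_sim_def
proof
  fix i assume i: "i \<in> S"
  consider "i = j" | "i \<noteq> j" "(j, i) \<in> r" | "i \<noteq> j" "(j, i) \<notin> r" by blast
  then show "rel_option (\<lambda>x y. grundy1 M x = grundy1 M y \<or> grundy0 M x = grundy0 M y \<and>
      join_top S r (join_upd S r P j a) i \<and> join_top S r (join_upd S r Q j b) i)
    (join_upd S r P j a i) (join_upd S r Q j b i)"
  proof cases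
    case 1
    then show ?thesis using assms(4) by (simp add: join_upd_def join_top_def)
  next
    case 2
    then show ?thesis using i by (simp add: join_upd_def)
  next
    case 3
    have top_P: "join_top S r (join_upd S r P j a) i" if "join_top S r P i"
      using that assms(2) unfolding join_top_def join_upd_def by auto
    have top_Q: "join_top S r (join_upd S r Q j b) i" if "join_top S r Q i"
      using that assms(3) unfolding join_top_def join_upd_def by auto
    have "join_upd S r P j a i = P i" "join_upd S r Q j b i = Q i"
      using 3 by (simp_all add: join_upd_def)
    moreover have "rel_option (\<lambda>x y. grundy1 M x = grundy1 M y \<or>
        grundy0 M x = grundy0 M y \<and> join_top S r P i \<and> join_top S r Q i) (P i) (Q i)"
      using assms(1) i unfolding join_sim_def by blast
    ultimately show ?thesis
      by (auto elim!: option.rel_mono_strong intro: top_P top_Q)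
  qed
qed

lemma join_sim_option_grundy0_neq:
  assumes tP: "terminating (join_move S r M) P" and tQ: "terminating (join_move S r M) Q"
    and sim: "join_sim S r M P Q" and mv: "join_move S r M P P'"
    and answer: "\<And>Q'. join_move S r M Q Q' \<Longrightarrow> join_sim S r M P' Q'
      \<Longrightarrow> grundy0 (join_move S r M) P' = grundy0 (join_move S r M) Q'"
    and reverse: "\<And>P''. join_move S r M P' P'' \<Longrightarrow> join_sim S r M P'' Q
      \<Longrightarrow> grundy0 (join_move S r M) P'' = grundy0 (join_move S r M) Q"
  shows "grundy0 (join_move S r M) P' \<noteq> grundy0 (join_move S r M) Q"
proof -
  let ?J = "join_move S r M"
  obtain j x x' where j: "j \<in> S" and Pj: "P j = Some x" and xx': "M x x'"
    and P': "P' = join_upd S r P j x'"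
    using mv unfolding join_move_iff by blast
  obtain y where Qj: "Q j = Some y" and xy: "grundy1 M x = grundy1 M y \<or>
      grundy0 M x = grundy0 M y \<and> join_top S r P j \<and> join_top S r Q j"
    using sim j Pj unfolding join_sim_def by (cases "Q j") auto
  have tx: "terminating M x" by (rule join_terminating_component[OF tP j Pj])
  have ty: "terminating M y" by (rule join_terminating_component[OF tQ j Qj])
  have x'_opt: "grundy0 M x' \<in> grundy1 M x" using xx' unfolding grundy1_def by blast
  show ?thesis
  proof (cases "grundy0 M x' \<in> grundy1 M y")
    case True
    then obtain y' where yy': "M y y'" and x'y': "grundy0 M x' = grundy0 M y'"
      unfolding grundy1_def by auto
    have "join_sim S r M P' (join_upd S r Q j y')"
      unfolding P' by (rule join_sim_upd[OF sim]) (simp_all add: Pj Qj x'y')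
    moreover have mQ: "?J Q (join_upd S r Q j y')" unfolding join_move_iff using j Qj yy' by blast
    ultimately show ?thesis using answer grundy0_option_neq[of ?J, OF tQ mQ] by metis
  next
    case False
    with xy x'_opt have xy0: "grundy0 M x = grundy0 M y"
      and topP: "join_top S r P j" and topQ: "join_top S r Q j" by auto
    have "grundy0 M y \<in> grundy1 M x'"
      using grundy0_in_grundy1_if_unmatched[OF ty terminating_move[OF tx xx'] _ False]
        grundy0_option_neq[OF tx xx'] xy0 by simp
    then obtain x'' where x'x'': "M x' x''" and x''y: "grundy0 M x'' = grundy0 M y"
      unfolding grundy1_def by auto
    have "join_sim S r M (join_upd S r P j x'') (join_upd S r Q j y)"
      by (rule join_sim_upd[OF sim]) (simp_all add: Pj Qj x''y)
    then have "join_sim S r M (join_upd S r P j x'') Q" by (simp add: join_upd_self[OF Qj topQ])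
    moreover have "?J P' (join_upd S r P' j x'')"
      unfolding join_move_iff using j x'x'' by (auto simp: P' join_upd_def)
    then have mP': "?J P' (join_upd S r P j x'')" by (simp add: P' join_upd_upd)
    ultimately show ?thesis
      using reverse grundy0_option_neq[of ?J, OF terminating_move[of ?J, OF tP mv] mP'] by metis
  qed
qed

lemma join_sim_grundy0_eq:
  assumes "terminating (join_move S r M) P" "terminating (join_move S r M) Q"
    and "join_sim S r M P Q"
  shows "grundy0 (join_move S r M) P = grundy0 (join_move S r M) Q"
  using assms
proof (induction "(P, Q)" arbitrary: P Q
    rule: wf_induct_rule[OF wf_lex_prod[OF wf_trancl wf_trancl,
      OF wf_move_rel[of "join_move S r M"] wf_move_rel[of "join_move S r M"]]])
  case (1 P Q)
  let ?J = "join_move S r M" and ?T = "(move_rel (join_move S r M))\<^sup>+"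
  note tP = "1.prems"(1) and tQ = "1.prems"(2) and sim = "1.prems"(3)
  have IH: "grundy0 ?J P' = grundy0 ?J Q'"
    if "(P', P) \<in> ?T \<or> P' = P \<and> (Q', Q) \<in> ?T" "terminating ?J P'" "terminating ?J Q'"
      "join_sim S r M P' Q'" for P' Q'
    using "1.hyps" that by (auto simp: lex_prod_def)
  have opt: "terminating ?J P' \<and> (P', P) \<in> ?T" if "terminating ?J P" "?J P P'" for P P'
    using that terminating_move[of ?J] unfolding move_rel_def by blast
  have "grundy0 ?J P' \<noteq> grundy0 ?J Q" if mv: "?J P P'" for P'
  proof (rule join_sim_option_grundy0_neq[OF tP tQ sim mv])
    from opt[OF tP mv] have tP': "terminating ?J P'" and PP': "(P', P) \<in> ?T" by blast+
    show "grundy0 ?J P' = grundy0 ?J Q'" if "?J Q Q'" "join_sim S r M P' Q'" for Q'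
      using IH[of P' Q'] PP' tP' opt[OF tQ] that by blast
    show "grundy0 ?J P'' = grundy0 ?J Q" if "?J P' P''" "join_sim S r M P'' Q" for P''
    proof -
      from opt[OF tP' that(1)] PP' have "terminating ?J P''" "(P'', P) \<in> ?T" by auto
      then show ?thesis using IH[of P'' Q] tQ that(2) by simp
    qed
  qed
  moreover have "grundy0 ?J Q' \<noteq> grundy0 ?J P" if mv: "?J Q Q'" for Q'
  proof (rule join_sim_option_grundy0_neq[OF tQ tP join_sim_sym[OF sim] mv])
    from opt[OF tQ mv] have tQ': "terminating ?J Q'" and QQ': "(Q', Q) \<in> ?T" by blast+
    show "grundy0 ?J Q' = grundy0 ?J P'" if "?J P P'" "join_sim S r M Q' P'" for P'
      using IH[of P' Q'] opt[OF tP] tQ' that join_sim_sym by metis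
    show "grundy0 ?J Q'' = grundy0 ?J P" if "?J Q' Q''" "join_sim S r M Q'' P" for Q''
    proof -
      from opt[OF tQ' that(1)] QQ' have "terminating ?J Q''" "(Q'', Q) \<in> ?T" by auto
      then show ?thesis using IH[of P Q''] tP join_sim_sym[OF that(2)] by simp
    qed
  qed
  ultimately show ?case
    by (intro grundy0_eqI[OF tP tQ]) (auto simp: grundy1_def)
qed

lemma join_grundy1_subset:
  assumes tP: "terminating (join_move S r M) P" and tQ: "terminating (join_move S r M) Q"
    and PQ: "\<forall>i\<in>S. rel_option (\<lambda>x y. grundy1 M x = grundy1 M y) (P i) (Q i)"
  shows "grundy1 (join_move S r M) P \<subseteq> grundy1 (join_move S r M) Q"
proof
  let ?J = "join_move S r M"
  fix v assume "v \<in> grundy1 ?J P"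
  then obtain P' where mv: "?J P P'" and v: "v = grundy0 ?J P'" unfolding grundy1_def by auto
  then obtain j x x' where j: "j \<in> S" and Pj: "P j = Some x" and xx': "M x x'"
    and P': "P' = join_upd S r P j x'"
    unfolding join_move_iff by blast
  obtain y where Qj: "Q j = Some y" and xy: "grundy1 M x = grundy1 M y"
    using PQ j Pj by (cases "Q j") auto
  have "grundy0 M x' \<in> grundy1 M y" using xx' xy[symmetric] unfolding grundy1_def by blast
  then obtain y' where yy': "M y y'" and x'y': "grundy0 M x' = grundy0 M y'"
    unfolding grundy1_def by auto
  have "join_sim S r M P Q"
    using PQ unfolding join_sim_def by (auto elim: option.rel_mono_strong)
  then have "join_sim S r M P' (join_upd S r Q j y')"
    unfolding P' by (rule join_sim_upd) (simp_all add: Pj Qj x'y')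
  moreover have mQ: "?J Q (join_upd S r Q j y')" unfolding join_move_iff using j Qj yy' by blast
  ultimately have "v = grundy0 ?J (join_upd S r Q j y')"
    using v join_sim_grundy0_eq terminating_move[of ?J, OF tP mv]
      terminating_move[of ?J, OF tQ mQ] by blast
  with mQ show "v \<in> grundy1 ?J Q" unfolding grundy1_def by blast
qed

theorem mainTheorem5:
  fixes S :: "'i set" and r :: "'i rel" and M :: "'a \<Rightarrow> 'a \<Rightarrow> bool"
    and g h :: "'i \<Rightarrow> 'a"
  assumes "partial_order_on S r"
    and "terminating (join_move S r M) (join_init g)"
    and "terminating (join_move S r M) (join_init h)"
    and "\<forall>i\<in>S. equiv1 M (g i) (h i)"
  shows "equiv1 (join_move S r M) (join_init g) (join_init h)"
proof -
  have "\<forall>i\<in>S. rel_option (\<lambda>x y. grundy1 M x = grundy1 M y) (join_init g i) (join_init h i)"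
    and "\<forall>i\<in>S. rel_option (\<lambda>x y. grundy1 M x = grundy1 M y) (join_init h i) (join_init g i)"
    using assms(4) by (simp_all add: join_init_def equiv1_def)
  then show ?thesis
    using join_grundy1_subset[OF assms(2,3)] join_grundy1_subset[OF assms(3,2)]
    unfolding equiv1_def by blast
qed

end
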